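(* Let $p_1,\dots,p_m$ be complex polynomials and for $z\in\mathbb{D}^*$ let $K_z$ be the semigroup generated by the contractions $f_i:x\mapsto zx+p_i(z)$, $1\le i\le m$. Then there is a regular language $L$ over a finite alphabet of complex numbers such that a power series $e(z)=a_0+a_1z+a_2z^2+\cdots$ is $L$-regular if and only if $e\in\partial K_z$, i.e. $e$ is the function of $z$ given by an infinite composition of the generators $f_i$.
   Context: For a right-infinite sequence $s_1s_2s_3\cdots$ of indices in $\{1,\dots,m\}$, the associated infinite composition is $e(z)=\lim_{n\to\infty}f_{s_1}\circ f_{s_2}\circ\cdots\circ f_{s_n}(x)$, which is independent of $x$ and is a power series in $z$; $\partial K_z$ denotes the set of all such power series. Given a finite alphabet $S\subset\mathbb{C}$ and a prefix-closed regular language $L\subseteq S^*$, let $\overline{L}$ be the set of right-infinite words over $S$ all of whose finite prefixes lie in $L$; a power series $a_0+a_1z+a_2z^2+\cdots$ is called $L$-regular if $(a_0,a_1,a_2,\dots)\in\overline{L}$. *)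

theory Defs
  imports "HOL-Analysis.Analysis" "HOL-Computational_Algebra.Polynomial"
begin

definition gen :: "(nat \<Rightarrow> complex poly) \<Rightarrow> nat \<Rightarrow> complex \<Rightarrow> complex \<Rightarrow> complex" where
  "gen p i z x = z * x + poly (p i) z"

text \<open>Finite composition f_{s 0} o f_{s 1} o ... o f_{s (n-1)} applied to x.\<close>
fun comp_gen :: "(nat \<Rightarrow> complex poly) \<Rightarrow> (nat \<Rightarrow> nat) \<Rightarrow> complex \<Rightarrow> nat \<Rightarrow> complex \<Rightarrow> complex" where
  "comp_gen p s z 0 x = x"
| "comp_gen p s z (Suc n) x = comp_gen p s z n (gen p (s n) z x)"

definition in_boundary_K :: "nat \<Rightarrow> (nat \<Rightarrow> complex poly) \<Rightarrow> (nat \<Rightarrow> complex) \<Rightarrow> bool" where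
  "in_boundary_K m p a \<longleftrightarrow>
     (\<exists>s::nat \<Rightarrow> nat. (\<forall>k. s k \<in> {1..m}) \<and>
        (\<forall>z. 0 < norm z \<and> norm z < 1 \<longrightarrow>
           summable (\<lambda>k. a k * z ^ k) \<and>
           (\<forall>x. (\<lambda>n. comp_gen p s z n x) \<longlonglongrightarrow> (\<Sum>k. a k * z ^ k))))"

definition regular_lang :: "'a list set \<Rightarrow> bool" where
  "regular_lang L \<longleftrightarrow>
     (\<exists>(Q::nat set) (\<delta>::nat \<Rightarrow> 'a \<Rightarrow> nat) q0 F.
        finite Q \<and> q0 \<in> Q \<and> F \<subseteq> Q \<and> (\<forall>q\<in>Q. \<forall>c. \<delta> q c \<in> Q) \<and>
        L = {w. fold (\<lambda>c q. \<delta> q c) w q0 \<in> F})"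

definition prefix_closed :: "'a list set \<Rightarrow> bool" where
  "prefix_closed L \<longleftrightarrow> (\<forall>w\<in>L. \<forall>n. take n w \<in> L)"

definition inf_closure :: "'a list set \<Rightarrow> (nat \<Rightarrow> 'a) set" where
  "inf_closure L = {a. \<forall>n. map a [0..<n] \<in> L}"

definition L_regular :: "'a list set \<Rightarrow> (nat \<Rightarrow> 'a) \<Rightarrow> bool" where
  "L_regular L a \<longleftrightarrow> a \<in> inf_closure L"

end

theory Submission
  imports Defs "HOL-Complex_Analysis.Cauchy_Integral_Formula"
begin

text \<open>
  For |z| < 1 the compositions f_(s 0) o ... o f_(s (n-1)) (x) = z^n x + \<Sum>k<n. z^k p_(s k)(z)
  converge to \<Sum>k. z^k p_(s k)(z), whose n-th Taylor coefficient \<Sum>j\<le>D. [z^j] p_(s (n-j))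
  only involves the letters s (n-D), ..., s n, where D bounds the degrees of the p_i. By the
  identity theorem for power series, the boundary set is therefore exactly the image of the
  infinite words over {1..m} under a sliding block code of memory D. The finite prefixes of
  the outputs of such a code form a regular language: a deterministic automaton only has to
  remember the set of input histories of length at most D compatible with the output read so
  far. Finally, by Koenig's lemma for the finite input alphabet, an infinite word all of whose
  prefixes are outputs is itself an output.
\<close>

lemma regular_langI:
  fixes Q :: "'s set" and \<delta> :: "'s \<Rightarrow> 'a \<Rightarrow> 's"
  assumes "finite Q" "q0 \<in> Q" "F \<subseteq> Q" "\<forall>q\<in>Q. \<forall>c. \<delta> q c \<in> Q"
    and L: "L = {w. fold (\<lambda>c q. \<delta> q c) w q0 \<in> F}"
  shows "regular_lang L"
proof -
  obtain f where f: "bij_betw f Q {0..<card Q}"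
    using ex_bij_betw_finite_nat[OF assms(1)] by blast
  then have inj: "inj_on f Q" by (rule bij_betw_imp_inj_on)
  define \<delta>' where "\<delta>' n c = f (\<delta> (inv_into Q f n) c)" for n c
  have fold_in: "fold (\<lambda>c q. \<delta> q c) w q \<in> Q" if "q \<in> Q" for w q
    using that assms(4) by (induction w arbitrary: q) auto
  have fold_f: "fold (\<lambda>c q. \<delta>' q c) w (f q) = f (fold (\<lambda>c q. \<delta> q c) w q)" if "q \<in> Q" for w q
    using that assms(4) by (induction w arbitrary: q) (auto simp: \<delta>'_def inv_into_f_f[OF inj])
  show ?thesis unfolding regular_lang_def
  proof (intro exI conjI)
    show "\<forall>q\<in>f ` Q. \<forall>c. \<delta>' q c \<in> f ` Q"
      using assms(4) inj by (auto simp: \<delta>'_def)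
    show "L = {w. fold (\<lambda>c q. \<delta>' q c) w (f q0) \<in> f ` F}"
      unfolding L fold_f[OF assms(2)] using inj fold_in[OF assms(2)] assms(3)
      by (auto simp: inj_on_image_mem_iff)
  qed (use assms(1-3) in auto)
qed

definition extendable :: "'a set \<Rightarrow> (nat \<Rightarrow> (nat \<Rightarrow> 'a) \<Rightarrow> bool) \<Rightarrow> 'a list \<Rightarrow> bool" where
  "extendable A P u \<longleftrightarrow>
     (\<forall>n. \<exists>s. (\<forall>j. s j \<in> A) \<and> map s [0..<length u] = u \<and> (\<forall>k<n. P k s))"

lemma extendable_snoc:
  assumes "finite A" and "extendable A P u"
  shows "\<exists>i\<in>A. extendable A P (u @ [i])"
proof (rule ccontr)
  assume "\<not> ?thesis"
  then obtain N where N: "\<And>i. i \<in> A \<Longrightarrow> \<not> (\<exists>s. (\<forall>j. s j \<in> A) \<and>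
      map s [0..<Suc (length u)] = u @ [i] \<and> (\<forall>k<N i. P k s))"
    unfolding extendable_def by (auto simp: not_less) metis
  from \<open>extendable A P u\<close> obtain s where s: "\<forall>j. s j \<in> A" "map s [0..<length u] = u"
    and P: "\<forall>k<Max (N ` A). P k s"
    unfolding extendable_def by blast
  have "N (s (length u)) \<le> Max (N ` A)"
    using \<open>finite A\<close> s(1) by (intro Max_ge) auto
  with s P N[of "s (length u)"] show False by auto
qed

lemma koenig_finite_alphabet:
  fixes A :: "'a set" and P :: "nat \<Rightarrow> (nat \<Rightarrow> 'a) \<Rightarrow> bool"
  assumes "finite A"
    and local: "\<And>k s t. (\<And>j. j \<le> k \<Longrightarrow> s j = t j) \<Longrightarrow> P k s \<longleftrightarrow> P k t"
    and approx: "\<And>n. \<exists>s. (\<forall>j. s j \<in> A) \<and> (\<forall>k<n. P k s)"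
  shows "\<exists>s. (\<forall>j. s j \<in> A) \<and> (\<forall>k. P k s)"
proof -
  have "\<exists>U. \<forall>n. (extendable A P (U n) \<and> length (U n) = n) \<and> (\<exists>i\<in>A. U (Suc n) = U n @ [i])"
  proof (rule dependent_nat_choice)
    show "\<exists>u. extendable A P u \<and> length u = 0"
      using approx by (auto simp: extendable_def)
  qed (use extendable_snoc[OF \<open>finite A\<close>] in fastforce)
  then obtain U where U: "\<And>n. extendable A P (U n) \<and> length (U n) = n"
    and U_Suc: "\<And>n. \<exists>i\<in>A. U (Suc n) = U n @ [i]"
    by blast
  define s where "s n = last (U (Suc n))" for n
  have U_eq: "U n = map s [0..<n]" for n
  proof (induction n)
    case 0 then show ?case using U[of 0] by simp
  next
    case (Suc n) then show ?case using U_Suc[of n] by (auto simp: s_def)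
  qed
  have "s j \<in> A" for j
    using U_Suc[of j] by (auto simp: s_def)
  moreover have "P k s" for k
  proof -
    obtain t where "map t [0..<Suc k] = U (Suc k)" "P k t"
      using U[of "Suc k"] unfolding extendable_def by (metis lessI)
    then show ?thesis
      using local[of k s t] by (simp add: U_eq less_Suc_eq_le del: upt_Suc)
  qed
  ultimately show ?thesis by blast
qed

definition history :: "nat \<Rightarrow> (nat \<Rightarrow> 'a) \<Rightarrow> nat \<Rightarrow> 'a list" where
  "history D s n = map s [n - min n D..<n]"

definition block_code :: "nat \<Rightarrow> ('a list \<Rightarrow> 'b) \<Rightarrow> (nat \<Rightarrow> 'a) \<Rightarrow> nat \<Rightarrow> 'b" where
  "block_code D \<phi> s n = \<phi> (history D s n @ [s n])"

definition block_code_prefixes :: "'a set \<Rightarrow> nat \<Rightarrow> ('a list \<Rightarrow> 'b) \<Rightarrow> 'b list set" where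
  "block_code_prefixes A D \<phi> =
     {w. \<exists>s. (\<forall>j. s j \<in> A) \<and> w = map (block_code D \<phi> s) [0..<length w]}"

definition block_code_state :: "'a set \<Rightarrow> nat \<Rightarrow> ('a list \<Rightarrow> 'b) \<Rightarrow> 'b list \<Rightarrow> 'a list set" where
  "block_code_state A D \<phi> w =
     {history D s (length w) | s. (\<forall>j. s j \<in> A) \<and> w = map (block_code D \<phi> s) [0..<length w]}"

definition block_code_step :: "'a set \<Rightarrow> nat \<Rightarrow> ('a list \<Rightarrow> 'b) \<Rightarrow> 'a list set \<Rightarrow> 'b \<Rightarrow> 'a list set" where
  "block_code_step A D \<phi> X c =
     {drop (Suc (length u) - D) (u @ [i]) | u i. u \<in> X \<and> i \<in> A \<and> c = \<phi> (u @ [i])}"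

lemma history_Suc:
  "history D s (Suc n) = drop (Suc (length (history D s n)) - D) (history D s n @ [s n])"
proof -
  have "history D s n @ [s n] = map s [n - min n D..<Suc n]"
    by (simp add: history_def)
  moreover have "Suc (length (history D s n)) - D = Suc n - min (Suc n) D - (n - min n D)"
    by (auto simp: history_def)
  ultimately show ?thesis
    by (simp add: history_def drop_map)
qed

lemma history_cong: "(\<And>j. j < n \<Longrightarrow> s j = t j) \<Longrightarrow> history D s n = history D t n"
  by (simp add: history_def)

lemma block_code_cong:
  "(\<And>j. j \<le> n \<Longrightarrow> s j = t j) \<Longrightarrow> block_code D \<phi> s n = block_code D \<phi> t n"
  unfolding block_code_def by (metis history_cong less_imp_le order_refl)

lemma block_code_state_snoc:
  "block_code_state A D \<phi> (w @ [c]) = block_code_step A D \<phi> (block_code_state A D \<phi> w) c"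
proof (intro equalityI subsetI)
  fix x assume "x \<in> block_code_state A D \<phi> (w @ [c])"
  then obtain s where s: "\<forall>j. s j \<in> A" "w = map (block_code D \<phi> s) [0..<length w]"
    and c: "c = block_code D \<phi> s (length w)" and x: "x = history D s (Suc (length w))"
    unfolding block_code_state_def by auto
  have "history D s (length w) \<in> block_code_state A D \<phi> w"
    unfolding block_code_state_def using s by blast
  then show "x \<in> block_code_step A D \<phi> (block_code_state A D \<phi> w) c"
    unfolding block_code_step_def x history_Suc
    using s(1) c by (auto simp: block_code_def)
next
  fix x assume "x \<in> block_code_step A D \<phi> (block_code_state A D \<phi> w) c"
  then obtain s i where s: "\<forall>j. s j \<in> A" "w = map (block_code D \<phi> s) [0..<length w]"
    and i: "i \<in> A" "c = \<phi> (history D s (length w) @ [i])"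
    and x: "x = drop (Suc (length (history D s (length w))) - D) (history D s (length w) @ [i])"
    unfolding block_code_step_def block_code_state_def by auto
  \<comment> \<open>Neither w nor the history at position length w depends on s (length w).\<close>
  define t where "t = s(length w := i)"
  have "block_code D \<phi> t k = block_code D \<phi> s k" if "k < length w" for k
    using that by (intro block_code_cong) (auto simp: t_def)
  then have w: "w = map (block_code D \<phi> t) [0..<length w]"
    using s(2) by (metis (no_types, lifting) atLeastLessThan_iff map_eq_conv set_upt)
  have h: "history D t (length w) = history D s (length w)"
    by (rule history_cong) (simp add: t_def)
  have "c = block_code D \<phi> t (length w)"
    using i h by (simp add: block_code_def t_def)
  with w have "w @ [c] = map (block_code D \<phi> t) [0..<length (w @ [c])]"
    by (metis length_append_singleton map_append list.map upt_Suc_append zero_le)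
  moreover have "x = history D t (length (w @ [c]))"
    using x h by (simp add: history_Suc t_def)
  moreover have "\<forall>j. t j \<in> A"
    using s(1) i(1) by (simp add: t_def)
  ultimately show "x \<in> block_code_state A D \<phi> (w @ [c])"
    unfolding block_code_state_def by blast
qed

lemma fold_block_code_step:
  "fold (\<lambda>c X. block_code_step A D \<phi> X c) w (block_code_state A D \<phi> []) = block_code_state A D \<phi> w"
  by (induction w rule: rev_induct) (simp_all add: block_code_state_snoc)

lemma block_code_prefixes_iff_state:
  "w \<in> block_code_prefixes A D \<phi> \<longleftrightarrow> block_code_state A D \<phi> w \<noteq> {}"
  by (auto simp: block_code_prefixes_def block_code_state_def)

lemma regular_block_code_prefixes:
  assumes "finite A"
  shows "regular_lang (block_code_prefixes A D \<phi>)"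
proof (rule regular_langI)
  let ?Q = "Pow {u. set u \<subseteq> A \<and> length u \<le> D}"
  show "finite ?Q"
    using assms by (simp add: finite_lists_length_le)
  show "block_code_state A D \<phi> w \<in> ?Q" for w
    by (auto simp: block_code_state_def history_def)
  show "\<forall>X\<in>?Q. \<forall>c. block_code_step A D \<phi> X c \<in> ?Q"
  proof (intro ballI allI)
    fix X c assume "X \<in> ?Q"
    then have "set (drop k (u @ [i])) \<subseteq> A" if "u \<in> X" "i \<in> A" for u i k
      using that set_drop_subset[of k "u @ [i]"] by auto
    then show "block_code_step A D \<phi> X c \<in> ?Q"
      by (auto simp: block_code_step_def simp del: drop_append)
  qed
  show "block_code_prefixes A D \<phi> =
      {w. fold (\<lambda>c X. block_code_step A D \<phi> X c) w (block_code_state A D \<phi> []) \<in> ?Q - {{}}}"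
    unfolding fold_block_code_step
    using block_code_prefixes_iff_state \<open>\<And>w. block_code_state A D \<phi> w \<in> ?Q\<close> by auto
qed auto

lemma prefix_closed_block_code_prefixes: "prefix_closed (block_code_prefixes A D \<phi>)"
  unfolding prefix_closed_def
proof (intro ballI allI)
  fix w n assume "w \<in> block_code_prefixes A D \<phi>"
  then obtain s where "\<forall>j. s j \<in> A" "w = map (block_code D \<phi> s) [0..<length w]"
    by (auto simp: block_code_prefixes_def)
  moreover have "take n w = map (block_code D \<phi> s) [0..<length (take n w)]"
    by (subst \<open>w = _\<close>) (simp add: take_map min_def)
  ultimately show "take n w \<in> block_code_prefixes A D \<phi>"
    unfolding block_code_prefixes_def by blast
qed

lemma block_code_prefixes_subset_lists:
  "block_code_prefixes A D \<phi> \<subseteq> lists (\<phi> ` {v. set v \<subseteq> A \<and> length v \<le> Suc D})"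
proof
  fix w assume "w \<in> block_code_prefixes A D \<phi>"
  then obtain s where s: "\<forall>j. s j \<in> A" and w: "w = map (block_code D \<phi> s) [0..<length w]"
    unfolding block_code_prefixes_def by blast
  have "block_code D \<phi> s n \<in> \<phi> ` {v. set v \<subseteq> A \<and> length v \<le> Suc D}" for n
    unfolding block_code_def using s by (intro imageI) (auto simp: history_def)
  then show "w \<in> lists (\<phi> ` {v. set v \<subseteq> A \<and> length v \<le> Suc D})"
    by (subst w) auto
qed

lemma inf_closure_block_code_prefixes:
  assumes "finite A"
  shows "a \<in> inf_closure (block_code_prefixes A D \<phi>) \<longleftrightarrow>
    (\<exists>s. (\<forall>j. s j \<in> A) \<and> a = block_code D \<phi> s)"
proof -
  have "a \<in> inf_closure (block_code_prefixes A D \<phi>) \<longleftrightarrow>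
      (\<forall>n. \<exists>s. (\<forall>j. s j \<in> A) \<and> (\<forall>k<n. a k = block_code D \<phi> s k))"
    by (simp add: inf_closure_def block_code_prefixes_def atLeast0LessThan Ball_def)
  also have "\<dots> \<longleftrightarrow> (\<exists>s. (\<forall>j. s j \<in> A) \<and> (\<forall>k. a k = block_code D \<phi> s k))"
  proof
    assume approx: "\<forall>n. \<exists>s. (\<forall>j. s j \<in> A) \<and> (\<forall>k<n. a k = block_code D \<phi> s k)"
    show "\<exists>s. (\<forall>j. s j \<in> A) \<and> (\<forall>k. a k = block_code D \<phi> s k)"
    proof (rule koenig_finite_alphabet[OF assms, where P = "\<lambda>k s. a k = block_code D \<phi> s k"])
      fix k and s t :: "nat \<Rightarrow> 'a"
      assume "\<And>j. j \<le> k \<Longrightarrow> s j = t j"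
      then have "block_code D \<phi> s k = block_code D \<phi> t k"
        by (rule block_code_cong)
      then show "(a k = block_code D \<phi> s k) \<longleftrightarrow> (a k = block_code D \<phi> t k)"
        by simp
    qed (use approx in blast)
  qed blast
  finally show ?thesis by (simp add: fun_eq_iff)
qed

definition poly_series_coeff :: "(nat \<Rightarrow> 'a::comm_semiring_0 poly) \<Rightarrow> nat \<Rightarrow> 'a" where
  "poly_series_coeff q n = (\<Sum>j\<le>n. coeff (q (n - j)) j)"

lemma poly_series_coeff_bounded_degree:
  assumes "\<And>k. degree (q k) \<le> D"
  shows "poly_series_coeff q n = (\<Sum>j\<le>min n D. coeff (q (n - j)) j)"
  unfolding poly_series_coeff_def
  by (rule sum.mono_neutral_right) (auto intro: order_trans[OF le_degree assms])

lemma summable_bounded_coeff_series: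
  fixes q :: "nat \<Rightarrow> 'a::{real_normed_field,banach} poly"
  assumes bound: "\<And>k. norm (coeff (q k) j) \<le> B" and z: "norm z < 1"
  shows "summable (\<lambda>k. coeff (q k) j * z ^ (k + j))"
proof (rule summable_comparison_test)
  show "\<exists>N. \<forall>k\<ge>N. norm (coeff (q k) j * z ^ (k + j)) \<le> B * norm z ^ k"
  proof (intro exI allI impI)
    fix k
    have "norm z ^ (k + j) \<le> norm z ^ k"
      using z by (intro power_decreasing) auto
    then show "norm (coeff (q k) j * z ^ (k + j)) \<le> B * norm z ^ k"
      unfolding norm_mult norm_power
      using bound order_trans[OF norm_ge_zero bound] by (intro mult_mono) auto
  qed
  show "summable (\<lambda>k. B * norm z ^ k)"
    using z by (intro summable_mult summable_geometric) auto
qed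

lemma sums_poly_series:
  fixes q :: "nat \<Rightarrow> 'a::{real_normed_field,banach} poly"
  assumes deg: "\<And>k. degree (q k) \<le> D"
    and bound: "\<And>k j. norm (coeff (q k) j) \<le> B"
    and z: "norm z < 1"
  shows "summable (\<lambda>k. z ^ k * poly (q k) z)"
    and "(\<lambda>n. poly_series_coeff q n * z ^ n) sums (\<Sum>k. z ^ k * poly (q k) z)"
proof -
  \<comment> \<open>Both series regroup the D + 1 convergent series h j: by the index k, resp. by the exponent k + j.\<close>
  define h where "h j k = coeff (q k) j * z ^ (k + j)" for j k
  have h_summable: "summable (h j)" for j
    unfolding h_def using bound z by (rule summable_bounded_coeff_series)
  define T where "T = (\<Sum>j\<le>D. suminf (h j))"
  have "(\<lambda>k. \<Sum>j\<le>D. h j k) sums T"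
    unfolding T_def by (intro sums_sum summable_sums h_summable)
  moreover have "(\<Sum>j\<le>D. h j k) = z ^ k * poly (q k) z" for k
  proof -
    have "poly (q k) z = poly (\<Sum>j\<le>D. monom (coeff (q k) j) j) z"
      by (simp only: poly_as_sum_of_monoms'[OF deg])
    then show ?thesis
      by (simp add: poly_sum poly_monom h_def sum_distrib_left power_add algebra_simps)
  qed
  ultimately have q_sums: "(\<lambda>k. z ^ k * poly (q k) z) sums T"
    by simp
  have shifted: "(\<lambda>n. if j \<le> n then coeff (q (n - j)) j * z ^ n else 0) sums suminf (h j)" for j
  proof -
    have "(\<lambda>k. (\<lambda>n. if j \<le> n then coeff (q (n - j)) j * z ^ n else 0) (k + j)) = h j"
      by (auto simp: h_def fun_eq_iff)
    then show ?thesis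
      using sums_zero_iff_shift[of j "\<lambda>n. if j \<le> n then coeff (q (n - j)) j * z ^ n else 0"]
        summable_sums[OF h_summable[of j]] by auto
  qed
  have "(\<lambda>n. \<Sum>j\<le>D. if j \<le> n then coeff (q (n - j)) j * z ^ n else 0) sums T"
    unfolding T_def by (intro sums_sum shifted)
  moreover have "(\<Sum>j\<le>D. if j \<le> n then coeff (q (n - j)) j * z ^ n else 0)
      = poly_series_coeff q n * z ^ n" for n
    unfolding poly_series_coeff_bounded_degree[OF deg] sum_distrib_right
    by (intro sum.mono_neutral_cong_right) auto
  ultimately show "(\<lambda>n. poly_series_coeff q n * z ^ n) sums (\<Sum>k. z ^ k * poly (q k) z)"
    using q_sums by (simp add: sums_iff)
  show "summable (\<lambda>k. z ^ k * poly (q k) z)"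
    using q_sums by (rule sums_summable)
qed

lemma power_series_unique_punctured:
  fixes a b :: "nat \<Rightarrow> 'a::{real_normed_field,banach}"
  assumes "0 < r"
    and a: "\<And>z. 0 < norm z \<Longrightarrow> norm z < r \<Longrightarrow> (\<lambda>k. a k * z ^ k) sums f z"
    and b: "\<And>z. 0 < norm z \<Longrightarrow> norm z < r \<Longrightarrow> (\<lambda>k. b k * z ^ k) sums f z"
  shows "a = b"
proof (rule ccontr)
  assume "a \<noteq> b"
  then obtain k where k: "a k \<noteq> b k" by auto
  \<comment> \<open>Multiplying by z makes the difference vanish at 0 as well, so the identity theorem applies.\<close>
  define d where "d n = (if n = 0 then 0 else a (n - 1) - b (n - 1))" for n
  have d_sums: "(\<lambda>n. d n * (z - 0) ^ n) sums 0" if "norm (z - 0) < r" for z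
  proof (cases "z = 0")
    case True
    then show ?thesis by (simp add: d_def)
  next
    case False
    with that have "(\<lambda>n. (a n * z ^ n - b n * z ^ n) * z) sums ((f z - f z) * z)"
      by (intro sums_mult2 sums_diff a b) auto
    moreover have "(\<lambda>n. (a n * z ^ n - b n * z ^ n) * z) = (\<lambda>n. d (Suc n) * z ^ Suc n)"
      by (auto simp: d_def fun_eq_iff algebra_simps)
    ultimately show ?thesis
      using sums_Suc_iff[of "\<lambda>n. d n * z ^ n" 0] by (simp add: d_def)
  qed
  have "d (Suc k) \<noteq> 0"
    using k by (simp add: d_def)
  show False
  proof (rule powser_0_nonzero[where f = "\<lambda>_. 0", OF \<open>0 < r\<close> d_sums _ \<open>d (Suc k) \<noteq> 0\<close>])
    fix r' :: real
    assume "0 < r'" and nonzero: "\<And>z::'a. z \<in> cball 0 r' - {0} \<Longrightarrow> (0::'a) \<noteq> 0"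
    have "of_real r' \<in> cball (0::'a) r' - {0}"
      using \<open>0 < r'\<close> by auto
    from nonzero[OF this] show False by simp
  qed auto
qed

lemma comp_gen_eq: "comp_gen p s z n x = z ^ n * x + (\<Sum>k<n. z ^ k * poly (p (s k)) z)"
  by (induction n arbitrary: x) (simp_all add: gen_def algebra_simps)

lemma finite_poly_family_bounded:
  fixes p :: "'i \<Rightarrow> 'a::real_normed_vector poly"
  assumes "finite I"
  obtains D B where "\<And>i. i \<in> I \<Longrightarrow> degree (p i) \<le> D"
    and "\<And>i j. i \<in> I \<Longrightarrow> norm (coeff (p i) j) \<le> B"
proof
  define D where "D = (\<Sum>i\<in>I. degree (p i))"
  show deg: "degree (p i) \<le> D" if "i \<in> I" for i
    unfolding D_def using assms that by (auto intro: member_le_sum)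
  show "norm (coeff (p i) j) \<le> (\<Sum>i\<in>I. \<Sum>j\<le>D. norm (coeff (p i) j))" if "i \<in> I" for i j
  proof (cases "j \<le> D")
    case True
    have "norm (coeff (p i) j) \<le> (\<Sum>j\<le>D. norm (coeff (p i) j))"
      using True by (intro member_le_sum) auto
    also have "\<dots> \<le> (\<Sum>i\<in>I. \<Sum>j\<le>D. norm (coeff (p i) j))"
      using assms that by (intro member_le_sum) (auto intro: sum_nonneg)
    finally show ?thesis .
  next
    case False
    then have "coeff (p i) j = 0"
      using deg[OF that] by (intro coeff_eq_0) auto
    then show ?thesis
      by (simp add: sum_nonneg)
  qed
qed

lemma
  assumes s: "\<forall>k. s k \<in> {1..m}" and z: "norm z < 1"
  shows sums_poly_series_coeff_comp:
      "(\<lambda>n. poly_series_coeff (p \<circ> s) n * z ^ n) sums (\<Sum>k. z ^ k * poly (p (s k)) z)"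
    and comp_gen_tendsto: "(\<lambda>n. comp_gen p s z n x) \<longlonglongrightarrow> (\<Sum>k. z ^ k * poly (p (s k)) z)"
proof -
  obtain D B where "\<And>i. i \<in> {1..m} \<Longrightarrow> degree (p i) \<le> D"
    and "\<And>i j. i \<in> {1..m} \<Longrightarrow> norm (coeff (p i) j) \<le> B"
    using finite_poly_family_bounded[of "{1..m}" p] by blast
  then have deg: "degree ((p \<circ> s) k) \<le> D" and bound: "norm (coeff ((p \<circ> s) k) j) \<le> B" for k j
    using s by auto
  show "(\<lambda>n. poly_series_coeff (p \<circ> s) n * z ^ n) sums (\<Sum>k. z ^ k * poly (p (s k)) z)"
    using sums_poly_series(2)[of "p \<circ> s", OF deg bound z] by simp
  have "(\<lambda>n. \<Sum>k<n. z ^ k * poly (p (s k)) z) \<longlonglongrightarrow> (\<Sum>k. z ^ k * poly (p (s k)) z)"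
    using sums_poly_series(1)[of "p \<circ> s", OF deg bound z] by (simp add: summable_LIMSEQ)
  then have "(\<lambda>n. z ^ n * x + (\<Sum>k<n. z ^ k * poly (p (s k)) z))
      \<longlonglongrightarrow> 0 * x + (\<Sum>k. z ^ k * poly (p (s k)) z)"
    using z by (intro tendsto_intros LIMSEQ_power_zero) auto
  then show "(\<lambda>n. comp_gen p s z n x) \<longlonglongrightarrow> (\<Sum>k. z ^ k * poly (p (s k)) z)"
    by (simp add: comp_gen_eq)
qed

lemma in_boundary_K_iff:
  "in_boundary_K m p a \<longleftrightarrow> (\<exists>s. (\<forall>k. s k \<in> {1..m}) \<and> a = poly_series_coeff (p \<circ> s))"
proof
  assume "in_boundary_K m p a"
  then obtain s where s: "\<forall>k. s k \<in> {1..m}" and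
    a: "\<And>z. 0 < norm z \<Longrightarrow> norm z < 1 \<Longrightarrow>
      summable (\<lambda>k. a k * z ^ k) \<and> (\<forall>x. (\<lambda>n. comp_gen p s z n x) \<longlonglongrightarrow> (\<Sum>k. a k * z ^ k))"
    unfolding in_boundary_K_def by auto
  have "a = poly_series_coeff (p \<circ> s)"
  proof (rule power_series_unique_punctured[OF zero_less_one])
    fix z :: complex assume z: "0 < norm z" "norm z < 1"
    then have "(\<Sum>k. a k * z ^ k) = (\<Sum>k. z ^ k * poly (p (s k)) z)"
      using a comp_gen_tendsto[OF s z(2)] LIMSEQ_unique by blast
    with a z show "(\<lambda>k. a k * z ^ k) sums (\<Sum>k. z ^ k * poly (p (s k)) z)"
      by (metis summable_sums)
    show "(\<lambda>k. poly_series_coeff (p \<circ> s) k * z ^ k) sums (\<Sum>k. z ^ k * poly (p (s k)) z)"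
      by (rule sums_poly_series_coeff_comp[OF s z(2)])
  qed
  with s show "\<exists>s. (\<forall>k. s k \<in> {1..m}) \<and> a = poly_series_coeff (p \<circ> s)" by blast
next
  assume "\<exists>s. (\<forall>k. s k \<in> {1..m}) \<and> a = poly_series_coeff (p \<circ> s)"
  then obtain s where s: "\<forall>k. s k \<in> {1..m}" and a: "a = poly_series_coeff (p \<circ> s)"
    by blast
  show "in_boundary_K m p a"
    unfolding in_boundary_K_def a
    using s sums_poly_series_coeff_comp[OF s] comp_gen_tendsto[OF s]
    by (intro exI[of _ s]) (auto simp: sums_iff)
qed

definition window_coeff :: "(nat \<Rightarrow> 'a::comm_semiring_0 poly) \<Rightarrow> nat list \<Rightarrow> 'a" where
  "window_coeff p v = (\<Sum>j<length v. coeff (p (rev v ! j)) j)"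

lemma poly_series_coeff_eq_block_code:
  assumes "\<And>k. degree (p (s k)) \<le> D"
  shows "poly_series_coeff (p \<circ> s) = block_code D (window_coeff p) s"
proof
  fix n
  define v where "v = history D s n @ [s n]"
  have v: "v = map s [n - min n D..<Suc n]"
    by (simp add: v_def history_def)
  have len: "length v = Suc (min n D)"
    by (simp add: v)
  have rev_v: "rev v ! j = s (n - j)" if "j \<le> min n D" for j
  proof -
    have "rev v ! j = v ! (min n D - j)"
      using that len by (subst rev_nth) auto
    also have "\<dots> = s (n - min n D + (min n D - j))"
      using that unfolding v by (subst nth_map_upt) auto
    finally show ?thesis
      using that by simp
  qed
  have "poly_series_coeff (p \<circ> s) n = (\<Sum>j\<le>min n D. coeff ((p \<circ> s) (n - j)) j)"
    by (rule poly_series_coeff_bounded_degree) (simp add: assms)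
  also have "\<dots> = (\<Sum>j\<le>min n D. coeff (p (rev v ! j)) j)"
    using rev_v by (intro sum.cong) auto
  also have "\<dots> = block_code D (window_coeff p) s n"
    unfolding block_code_def window_coeff_def v_def[symmetric] len lessThan_Suc_atMost ..
  finally show "poly_series_coeff (p \<circ> s) n = block_code D (window_coeff p) s n" .
qed

theorem proposition4p3p2:
  fixes m :: nat and p :: "nat \<Rightarrow> complex poly"
  shows "\<exists>(S::complex set) (L::complex list set).
           finite S \<and> L \<subseteq> lists S \<and> regular_lang L \<and> prefix_closed L \<and>
           (\<forall>a::nat \<Rightarrow> complex. L_regular L a \<longleftrightarrow> in_boundary_K m p a)"
proof -
  obtain D where deg: "\<And>i. i \<in> {1..m} \<Longrightarrow> degree (p i) \<le> D"
    using finite_poly_family_bounded[OF finite_atLeastAtMost, of 1 m p] by metis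
  define L where "L = block_code_prefixes {1..m} D (window_coeff p)"
  define S where "S = window_coeff p ` {v. set v \<subseteq> {1..m} \<and> length v \<le> Suc D}"
  have "L_regular L a \<longleftrightarrow> in_boundary_K m p a" for a
  proof -
    have "poly_series_coeff (p \<circ> s) = block_code D (window_coeff p) s" if "\<forall>k. s k \<in> {1..m}" for s
      using that deg by (intro poly_series_coeff_eq_block_code) auto
    then show ?thesis
      unfolding L_regular_def L_def inf_closure_block_code_prefixes[OF finite_atLeastAtMost]
        in_boundary_K_iff
      by auto
  qed
  moreover have "finite S"
    unfolding S_def by (simp add: finite_lists_length_le)
  moreover have "L \<subseteq> lists S" "regular_lang L" "prefix_closed L"
    unfolding L_def S_def
    by (rule block_code_prefixes_subset_lists regular_block_code_prefixes[OF finite_atLeastAtMost]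
        prefix_closed_block_code_prefixes)+
  ultimately show ?thesis
    by blast
qed

end
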